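(* Let $W,V$ be subspaces of $\mathbb{R}^n$ with $\mathbb{R}^n=W\oplus V^\perp$, and let $\mu\in\mathcal{P}_2(W)$ be a probabilistic frame for $W$ with frame operator $\mathbf{S}_\mu$. A measurable map $T:W\to V$ is such that $T_\#\mu$ is an oblique dual probabilistic frame of $\mu$ on $V$ with respect to the coupling $(\mathbf{Id},T)_\#\mu$ (i.e. $T_\#\mu\in\mathcal{P}_2(V)$ and $\int_W\mathbf{x}\,T(\mathbf{x})^t\,d\mu(\mathbf{x})=\boldsymbol{\pi}_{WV^\perp}$) if and only if there is a measurable map $h:W\to V$ with $h_\#\mu\in\mathcal{P}_2(V)$ such that for all $\mathbf{x}\in W$, $$T(\mathbf{x})=\boldsymbol{\pi}_{VW^\perp}\mathbf{S}_\mu^\dagger\mathbf{x}+h(\mathbf{x})-\int_W\langle\mathbf{S}_\mu^\dagger\mathbf{x},\mathbf{y}\rangle\,h(\mathbf{y})\,d\mu(\mathbf{y}).$$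
   Context: $\mathcal{P}_2(S)$ denotes Borel probability measures on $\mathbb{R}^n$ concentrated on the subspace $S$ with finite second moment. $\mu\in\mathcal{P}_2(W)$ is a probabilistic frame for $W$ if there exist $0<A\le B<\infty$ with $A\|\mathbf{x}\|^2\le\int_W|\langle\mathbf{x},\mathbf{y}\rangle|^2d\mu(\mathbf{y})\le B\|\mathbf{x}\|^2$ for all $\mathbf{x}\in W$; its frame operator is $\mathbf{S}_\mu=\int_W\mathbf{y}\mathbf{y}^td\mu(\mathbf{y})$, and $\mathbf{S}_\mu^\dagger$ is its Moore–Penrose inverse. $T_\#\mu(E)=\mu(T^{-1}(E))$ and $(\mathbf{Id},T)_\#\mu$ is the pushforward of $\mu$ under $\mathbf{x}\mapsto(\mathbf{x},T(\mathbf{x}))$. $\boldsymbol{\pi}_{WV^\perp}$ is the oblique projection onto $W$ along $V^\perp$, and $\boldsymbol{\pi}_{VW^\perp}$ the oblique projection onto $V$ along $W^\perp$. $\nu\in\mathcal{P}_2(V)$ is an oblique dual probabilistic frame of $\mu$ on $V$ with respect to a coupling $\gamma$ of $\mu$ and $\nu$ if $\int_{W\times V}\mathbf{x}\mathbf{y}^t\,d\gamma(\mathbf{x},\mathbf{y})=\boldsymbol{\pi}_{WV^\perp}$. *)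

theory Defs
  imports "HOL-Probability.Probability"
begin

definition orth_comp :: "(real^'n) set \<Rightarrow> (real^'n) set" where
  "orth_comp V = {x. \<forall>v\<in>V. x \<bullet> v = 0}"

definition outer :: "real^'n \<Rightarrow> real^'n \<Rightarrow> real^'n^'n" where
  "outer x y = (\<chi> i j. x $ i * y $ j)"

definition direct_sum_UNIV :: "(real^'n) set \<Rightarrow> (real^'n) set \<Rightarrow> bool" where
  "direct_sum_UNIV W U \<longleftrightarrow> subspace W \<and> subspace U \<and> W \<inter> U = {0} \<and>
     (\<forall>x. \<exists>w\<in>W. \<exists>u\<in>U. x = w + u)"

definition oblique_proj :: "(real^'n) set \<Rightarrow> (real^'n) set \<Rightarrow> real^'n^'n" where
  "oblique_proj W U = matrix (\<lambda>x. THE w. w \<in> W \<and> x - w \<in> U)"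

definition mp_inverse :: "real^'n^'n \<Rightarrow> real^'n^'n" where
  "mp_inverse A = (THE B. A ** B ** A = A \<and> B ** A ** B = B \<and>
      transpose (A ** B) = A ** B \<and> transpose (B ** A) = B ** A)"

definition P2 :: "(real^'n) set \<Rightarrow> (real^'n) measure \<Rightarrow> bool" where
  "P2 S M \<longleftrightarrow> prob_space M \<and> sets M = sets borel \<and> (AE y in M. y \<in> S) \<and>
     integrable M (\<lambda>y. norm y ^ 2)"

definition frame_operator :: "(real^'n) measure \<Rightarrow> real^'n^'n" where
  "frame_operator M = (\<integral>y. outer y y \<partial>M)"

definition prob_frame :: "(real^'n) set \<Rightarrow> (real^'n) measure \<Rightarrow> bool" where
  "prob_frame W M \<longleftrightarrow> P2 W M \<and> (\<exists>A B. 0 < A \<and> A \<le> B \<and>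
     (\<forall>x\<in>W. A * norm x ^ 2 \<le> (\<integral>y. (x \<bullet> y) ^ 2 \<partial>M) \<and>
             (\<integral>y. (x \<bullet> y) ^ 2 \<partial>M) \<le> B * norm x ^ 2))"

end

theory Submission
  imports Defs
begin

text \<open>
  Let P be the oblique projection onto W along V\<bottom>, S the frame operator of \<mu> and Z its
  Moore-Penrose inverse. The lower frame bound makes S injective on W, so S Z^t = Z S is
  the orthogonal projection \<pi> onto W, and the projection onto V along W\<bottom> is P^t.
  For square-integrable h with moment H = \<integral> y h(y)^t d\<mu>, the integral term of the formula
  is H^t Z x, so the formula reads T x = B^t x + h x on W with B = Z^t (P - H). Then
  \<integral> x T(x)^t d\<mu> = S B + H = \<pi> (P - H) + H = P, as P and H take values in W. Conversely,
  a dual map T is represented by h = T: its moment is P, and the formula collapses to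
  T x = P^t Z x + T x - P^t Z x.
\<close>

section \<open>Outer products and second moments\<close>

lemma outer_matrix_vector_mult: "outer x v *v z = (v \<bullet> z) *\<^sub>R x"
  by (simp add: outer_def matrix_vector_mult_def inner_vec_def vec_eq_iff sum_distrib_left mult_ac)

lemma transpose_outer: "transpose (outer x v) = outer v x"
  by (simp add: outer_def transpose_def vec_eq_iff)

lemma outer_matrix_mult: "outer x v ** A = outer x (transpose A *v v)"
  by (simp add: outer_def matrix_matrix_mult_def matrix_vector_mult_def transpose_def vec_eq_iff
      sum_distrib_left mult_ac)

lemma matrix_mult_outer: "A ** outer x v = outer (A *v x) v"
  by (simp add: outer_def matrix_matrix_mult_def matrix_vector_mult_def vec_eq_iff
      sum_distrib_left sum_distrib_right mult_ac)

lemma outer_add_right: "outer x (u + v) = outer x u + outer x v"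
  by (simp add: outer_def vec_eq_iff algebra_simps)

lemma norm_outer: "norm (outer x v) = norm x * norm v"
proof -
  have "outer x v $ i = x $ i *\<^sub>R v" for i
    by (simp add: outer_def vec_eq_iff)
  then have "norm (outer x v $ i) = norm (x $ i) * norm v" for i
    by simp
  then have "norm (outer x v) = L2_set (\<lambda>i. norm (x $ i) * norm v) UNIV"
    by (simp only: norm_vec_def)
  then show ?thesis
    by (simp add: L2_set_left_distrib[symmetric] norm_vec_def)
qed

lemma borel_measurable_outer:
  fixes f g :: "'a \<Rightarrow> real^'n"
  assumes "f \<in> borel_measurable M" "g \<in> borel_measurable M"
  shows "(\<lambda>x. outer (f x) (g x)) \<in> borel_measurable M"
proof -
  have "continuous_on UNIV (\<lambda>p. outer (fst p) (snd p) :: real^'n^'n)"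
    unfolding outer_def by (intro continuous_intros)
  from borel_measurable_continuous_on[OF this borel_measurable_Pair[OF assms]] show ?thesis
    by simp
qed

lemma integrable_outer:
  fixes f g :: "'a \<Rightarrow> real^'n"
  assumes "f \<in> borel_measurable M" "g \<in> borel_measurable M"
    and "integrable M (\<lambda>x. norm (f x)^2)" "integrable M (\<lambda>x. norm (g x)^2)"
  shows "integrable M (\<lambda>x. outer (f x) (g x))"
proof (rule Bochner_Integration.integrable_bound)
  show "integrable M (\<lambda>x. norm (f x)^2 + norm (g x)^2)"
    using assms(3,4) by (rule Bochner_Integration.integrable_add)
  show "AE x in M. norm (outer (f x) (g x)) \<le> norm (norm (f x)^2 + norm (g x)^2)"
  proof (intro AE_I2)
    fix x
    have "norm (f x) * norm (g x) \<le> norm (f x)^2 + norm (g x)^2"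
      using sum_squares_bound[of "norm (f x)" "norm (g x)"]
        mult_nonneg_nonneg[OF norm_ge_zero norm_ge_zero, of "f x" "g x"] by linarith
    then show "norm (outer (f x) (g x)) \<le> norm (norm (f x)^2 + norm (g x)^2)"
      by (simp add: norm_outer)
  qed
  show "(\<lambda>x. outer (f x) (g x)) \<in> borel_measurable M"
    using assms(1,2) by (rule borel_measurable_outer)
qed

lemma integrable_norm_sq_add:
  fixes f g :: "'a \<Rightarrow> 'b::euclidean_space"
  assumes [measurable]: "f \<in> borel_measurable M" "g \<in> borel_measurable M"
    and "integrable M (\<lambda>x. norm (f x)^2)" "integrable M (\<lambda>x. norm (g x)^2)"
  shows "integrable M (\<lambda>x. norm (f x + g x)^2)"
proof (rule Bochner_Integration.integrable_bound)
  show "integrable M (\<lambda>x. 2 * norm (f x)^2 + 2 * norm (g x)^2)"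
    using assms(3,4) by (intro Bochner_Integration.integrable_add integrable_mult_right)
  have "norm (f x + g x)^2 \<le> 2 * norm (f x)^2 + 2 * norm (g x)^2" for x
  proof -
    have "norm (f x + g x)^2 \<le> (norm (f x) + norm (g x))^2"
      by (simp add: norm_triangle_ineq power_mono)
    also have "\<dots> \<le> 2 * norm (f x)^2 + 2 * norm (g x)^2"
      unfolding power2_sum using sum_squares_bound[of "norm (f x)" "norm (g x)"] by linarith
    finally show ?thesis .
  qed
  then show "AE x in M. norm (norm (f x + g x)^2) \<le> norm (2 * norm (f x)^2 + 2 * norm (g x)^2)"
    by simp
  show "(\<lambda>x. norm (f x + g x)^2) \<in> borel_measurable M"
    by measurable
qed

lemma integrable_norm_sq_linear:
  fixes f :: "'a \<Rightarrow> 'b::euclidean_space" and L :: "'b \<Rightarrow> 'c::euclidean_space"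
  assumes "bounded_linear L" and [measurable]: "f \<in> borel_measurable M"
    and "integrable M (\<lambda>x. norm (f x)^2)"
  shows "integrable M (\<lambda>x. norm (L (f x))^2)"
proof -
  have [measurable]: "L \<in> borel_measurable borel"
    using assms(1) by (intro borel_measurable_continuous_onI linear_continuous_on)
  obtain K where K: "\<And>x. norm (L x) \<le> norm x * K"
    using bounded_linear.bounded[OF assms(1)] by blast
  show ?thesis
  proof (rule Bochner_Integration.integrable_bound)
    show "integrable M (\<lambda>x. K^2 * norm (f x)^2)"
      using assms(3) by (rule integrable_mult_right)
    show "AE x in M. norm (norm (L (f x))^2) \<le> norm (K^2 * norm (f x)^2)"
    proof (intro AE_I2)
      fix x
      have "norm (L (f x))^2 \<le> (norm (f x) * K)^2"
        using power_mono[OF K norm_ge_zero] .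
      then show "norm (norm (L (f x))^2) \<le> norm (K^2 * norm (f x)^2)"
        by (simp add: power_mult_distrib mult.commute)
    qed
    show "(\<lambda>x. norm (L (f x))^2) \<in> borel_measurable M"
      by measurable
  qed
qed

section \<open>Matrix-valued integrals\<close>

lemma matrix_add_rdistrib: "(A + B) ** C = A ** C + B ** C"
  by (vector matrix_matrix_mult_def sum.distrib[symmetric] field_simps)

lemma matrix_diff_ldistrib: "A ** (B - C) = A ** B - A ** C"
  for A :: "'a::ring_1^'n^'m" and B C :: "'a^'p^'n"
  by (vector matrix_matrix_mult_def sum_subtractf[symmetric] field_simps)

lemma matrix_diff_rdistrib: "(A - B) ** C = A ** C - B ** C"
  for A B :: "'a::ring_1^'n^'m" and C :: "'a^'p^'n"
  by (vector matrix_matrix_mult_def sum_subtractf[symmetric] field_simps)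

lemma transpose_diff: "transpose (A - B) = transpose A - transpose B"
  by (simp add: transpose_def vec_eq_iff)

lemma bounded_linear_matrix_mult_left: "bounded_linear (\<lambda>G::real^'n^'m. A ** G)"
  unfolding linear_conv_bounded_linear[symmetric]
  by (rule linearI) (simp_all add: matrix_add_ldistrib vec_eq_iff matrix_matrix_mult_def
      sum_distrib_left sum.distrib algebra_simps)

lemma bounded_linear_matrix_mult_right: "bounded_linear (\<lambda>G::real^'n^'m. G ** A)"
  unfolding linear_conv_bounded_linear[symmetric]
  by (rule linearI) (simp_all add: matrix_add_rdistrib vec_eq_iff matrix_matrix_mult_def
      sum_distrib_left sum.distrib algebra_simps)

lemma bounded_linear_transpose: "bounded_linear (transpose :: real^'n^'m \<Rightarrow> real^'m^'n)"
  unfolding linear_conv_bounded_linear[symmetric]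
  by (rule linearI) (simp_all add: transpose_def vec_eq_iff)

lemma bounded_linear_matrix_vector_mult_left: "bounded_linear (\<lambda>G::real^'n^'m. G *v z)"
  unfolding linear_conv_bounded_linear[symmetric]
  by (rule linearI) (simp_all add: matrix_vector_mult_add_rdistrib vec_eq_iff matrix_vector_mult_def
      sum_distrib_left sum.distrib algebra_simps)

lemma integral_inner_scaleR_eq_moment:
  fixes g :: "real^'n \<Rightarrow> real^'n"
  assumes "integrable M (\<lambda>y. outer y (g y))"
  shows "(\<integral>y. (z \<bullet> y) *\<^sub>R g y \<partial>M) = transpose (\<integral>y. outer y (g y) \<partial>M) *v z"
proof -
  have "bounded_linear (\<lambda>G::real^'n^'n. transpose G *v z)"
    using bounded_linear_compose[OF bounded_linear_matrix_vector_mult_left bounded_linear_transpose]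
    by (simp add: o_def)
  from integral_bounded_linear[OF this assms] show ?thesis
    by (simp add: transpose_outer outer_matrix_vector_mult inner_commute)
qed

lemma matrix_mult_moment:
  fixes g :: "real^'n \<Rightarrow> real^'n"
  assumes "\<And>y. y \<in> W \<Longrightarrow> A *v y = y" "AE y in M. y \<in> W"
    and "integrable M (\<lambda>y. outer y (g y))"
  shows "A ** (\<integral>y. outer y (g y) \<partial>M) = (\<integral>y. outer y (g y) \<partial>M)"
proof -
  have "A ** (\<integral>y. outer y (g y) \<partial>M) = (\<integral>y. A ** outer y (g y) \<partial>M)"
    by (rule integral_bounded_linear[OF bounded_linear_matrix_mult_left assms(3), symmetric])
  also have "\<dots> = (\<integral>y. outer y (g y) \<partial>M)"
  proof (rule integral_cong_AE)
    show "(\<lambda>y. A ** outer y (g y)) \<in> borel_measurable M"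
      using integrable_bounded_linear[OF bounded_linear_matrix_mult_left assms(3)]
      by (rule borel_measurable_integrable)
    show "(\<lambda>y. outer y (g y)) \<in> borel_measurable M"
      using assms(3) by (rule borel_measurable_integrable)
    show "AE y in M. A ** outer y (g y) = outer y (g y)"
      using assms(2) by eventually_elim (simp add: matrix_mult_outer assms(1))
  qed
  finally show ?thesis .
qed

section \<open>Oblique projections\<close>

lemma direct_sum_UNIV_ex1:
  assumes "direct_sum_UNIV W U"
  shows "\<exists>!w. w \<in> W \<and> x - w \<in> U"
proof -
  from assms have "subspace W" "subspace U" "W \<inter> U = {0}"
    unfolding direct_sum_UNIV_def by blast+
  obtain w u where "w \<in> W" "u \<in> U" "x = w + u"
    using assms unfolding direct_sum_UNIV_def by blast
  show ?thesis
  proof (rule ex1I[of _ w])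
    show "w \<in> W \<and> x - w \<in> U"
      using \<open>w \<in> W\<close> \<open>u \<in> U\<close> \<open>x = w + u\<close> by simp
    fix w' assume w': "w' \<in> W \<and> x - w' \<in> U"
    have "w' - w \<in> W"
      using w' \<open>w \<in> W\<close> \<open>subspace W\<close> by (simp add: subspace_diff)
    moreover have "w' - w \<in> U"
      using subspace_diff[OF \<open>subspace U\<close> \<open>u \<in> U\<close>, of "x - w'"] w' \<open>x = w + u\<close> by simp
    ultimately have "w' - w \<in> W \<inter> U"
      by blast
    then show "w' = w"
      using \<open>W \<inter> U = {0}\<close> by simp
  qed
qed

lemma linear_direct_sum_component:
  assumes ds: "direct_sum_UNIV W U"
  shows "linear (\<lambda>x. THE w. w \<in> W \<and> x - w \<in> U)" (is "linear ?p")
proof -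
  from ds have "subspace W" "subspace U"
    unfolding direct_sum_UNIV_def by blast+
  have p: "?p x \<in> W \<and> x - ?p x \<in> U" for x
    using theI'[OF direct_sum_UNIV_ex1[OF ds]] .
  have p_eq: "?p x = w" if "w \<in> W" "x - w \<in> U" for x w
    using the1_equality[OF direct_sum_UNIV_ex1[OF ds]] that by blast
  show ?thesis
  proof (rule linearI)
    fix x y
    show "?p (x + y) = ?p x + ?p y"
      using p[of x] p[of y] subspace_add[OF \<open>subspace W\<close>]
        subspace_add[OF \<open>subspace U\<close>, of "x - ?p x" "y - ?p y"]
      by (intro p_eq) (auto simp: algebra_simps)
  next
    fix c :: real and x
    show "?p (c *\<^sub>R x) = c *\<^sub>R ?p x"
      using p[of x] subspace_scale[OF \<open>subspace W\<close>]
        subspace_scale[OF \<open>subspace U\<close>, of "x - ?p x" c]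
      by (intro p_eq) (auto simp: algebra_simps)
  qed
qed

lemma oblique_proj_eq_iff:
  assumes "direct_sum_UNIV W U"
  shows "oblique_proj W U *v x = w \<longleftrightarrow> w \<in> W \<and> x - w \<in> U"
proof -
  let ?p = "THE w. w \<in> W \<and> x - w \<in> U"
  have "oblique_proj W U *v x = ?p"
    unfolding oblique_proj_def using linear_direct_sum_component[OF assms] by simp
  moreover have "?p \<in> W \<and> x - ?p \<in> U"
    using theI'[OF direct_sum_UNIV_ex1[OF assms]] .
  moreover have "?p = w" if "w \<in> W \<and> x - w \<in> U"
    using the1_equality[OF direct_sum_UNIV_ex1[OF assms] that] .
  ultimately show ?thesis
    by auto
qed

lemma oblique_proj_mem:
  assumes "direct_sum_UNIV W U"
  shows "oblique_proj W U *v x \<in> W" and "x - oblique_proj W U *v x \<in> U"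
  using oblique_proj_eq_iff[OF assms, of x "oblique_proj W U *v x"] by simp_all

lemma orth_comp_eq_orthogonal_comp: "orth_comp V = V\<^sup>\<bottom>"
  by (auto simp: orth_comp_def orthogonal_comp_def orthogonal_def inner_commute)

lemma direct_sum_UNIV_orth_comp:
  assumes "subspace W"
  shows "direct_sum_UNIV W (orth_comp W)"
proof -
  have "\<exists>w\<in>W. \<exists>u\<in>orth_comp W. x = w + u" for x
  proof -
    have "x \<in> W + W\<^sup>\<bottom>"
      using subspace_sum_orthogonal_comp[OF assms] by simp
    then obtain w u where "x = w + u" "w \<in> W" "u \<in> W\<^sup>\<bottom>"
      by (rule set_plus_elim)
    then show ?thesis
      by (auto simp: orth_comp_eq_orthogonal_comp)
  qed
  then show ?thesis
    using assms orthogonal_Int_0[OF assms] subspace_orthogonal_comp[of W]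
    by (simp add: direct_sum_UNIV_def orth_comp_eq_orthogonal_comp)
qed

lemma transpose_oblique_proj_mem:
  assumes "subspace V" and ds: "direct_sum_UNIV W (orth_comp V)"
  defines "P \<equiv> oblique_proj W (orth_comp V)"
  shows "transpose P *v x \<in> V" and "x - transpose P *v x \<in> orth_comp W"
proof -
  have adjoint: "(transpose P *v x) \<bullet> y = x \<bullet> (P *v y)" for y
    by (simp add: dot_lmul_matrix)
  have "0 \<in> W"
    using ds by (simp add: direct_sum_UNIV_def subspace_0)
  have "(transpose P *v x) \<bullet> u = 0" if "u \<in> orth_comp V" for u
  proof -
    have "P *v u = 0"
      using oblique_proj_eq_iff[OF ds, of u 0] \<open>0 \<in> W\<close> that by (simp add: P_def)
    then show ?thesis
      using adjoint[of u] by simp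
  qed
  then have "transpose P *v x \<in> (orth_comp V)\<^sup>\<bottom>"
    by (auto simp: orthogonal_comp_def orthogonal_def inner_commute)
  then show "transpose P *v x \<in> V"
    by (simp add: orth_comp_eq_orthogonal_comp orthogonal_comp_self assms(1))
  have "(x - transpose P *v x) \<bullet> w = 0" if "w \<in> W" for w
  proof -
    have "P *v w = w"
      using oblique_proj_eq_iff[OF ds, of w w] that by (simp add: P_def orth_comp_def)
    then show ?thesis
      using adjoint[of w] by (simp add: inner_diff_left)
  qed
  then show "x - transpose P *v x \<in> orth_comp W"
    by (simp add: orth_comp_def)
qed

lemma direct_sum_UNIV_dual:
  assumes "subspace V" and ds: "direct_sum_UNIV W (orth_comp V)"
  shows "direct_sum_UNIV V (orth_comp W)"
proof -
  have "V \<inter> orth_comp W \<subseteq> {0}"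
  proof
    fix v assume v: "v \<in> V \<inter> orth_comp W"
    obtain w u where "w \<in> W" "u \<in> orth_comp V" "v = w + u"
      using ds unfolding direct_sum_UNIV_def by blast
    moreover have "v \<bullet> w = 0"
      using v \<open>w \<in> W\<close> by (simp add: orth_comp_def)
    moreover have "u \<bullet> v = 0"
      using v \<open>u \<in> orth_comp V\<close> by (simp add: orth_comp_def)
    ultimately have "v \<bullet> v = 0"
      by (simp add: inner_add_right inner_commute)
    then show "v \<in> {0}"
      by simp
  qed
  moreover have "\<exists>v\<in>V. \<exists>u\<in>orth_comp W. x = v + u" for x
    using transpose_oblique_proj_mem[OF assms, of x] by (metis add.commute diff_add_cancel)
  moreover have "0 \<in> V \<inter> orth_comp W"
    using subspace_0[OF assms(1)] by (simp add: orth_comp_def)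
  ultimately show ?thesis
    using assms(1) subspace_orthogonal_comp[of W]
    unfolding direct_sum_UNIV_def orth_comp_eq_orthogonal_comp by blast
qed

lemma oblique_proj_dual:
  assumes "subspace V" and "direct_sum_UNIV W (orth_comp V)"
  shows "oblique_proj V (orth_comp W) = transpose (oblique_proj W (orth_comp V))"
  unfolding matrix_eq
  using oblique_proj_eq_iff[OF direct_sum_UNIV_dual[OF assms]] transpose_oblique_proj_mem[OF assms]
  by blast

lemma oblique_proj_orth_comp:
  assumes "subspace W"
  defines "P \<equiv> oblique_proj W (orth_comp W)"
  shows "transpose P = P" and "P ** P = P" and "\<And>w. w \<in> W \<Longrightarrow> P *v w = w"
    and "\<And>x. P *v x \<in> W"
proof -
  have ds: "direct_sum_UNIV W (orth_comp W)"
    using direct_sum_UNIV_orth_comp[OF assms(1)] .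
  show "transpose P = P"
    using oblique_proj_dual[OF assms(1) ds] by (simp add: P_def)
  show fixes_W: "P *v w = w" if "w \<in> W" for w
    using oblique_proj_eq_iff[OF ds, of w w] that by (simp add: P_def orth_comp_def)
  show mem: "P *v x \<in> W" for x
    using oblique_proj_mem(1)[OF ds] by (simp add: P_def)
  show "P ** P = P"
    unfolding matrix_eq by (simp add: matrix_vector_mul_assoc[symmetric] fixes_W mem)
qed

section \<open>The Moore-Penrose inverse\<close>

definition is_mp_inverse :: "real^'n^'n \<Rightarrow> real^'n^'n \<Rightarrow> bool" where
  "is_mp_inverse A B \<longleftrightarrow> A ** B ** A = A \<and> B ** A ** B = B \<and>
      transpose (A ** B) = A ** B \<and> transpose (B ** A) = B ** A"

lemma is_mp_inverse_unique:
  assumes "is_mp_inverse A B" "is_mp_inverse A B'"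
  shows "B = B'"
proof -
  from assms have a: "A ** B ** A = A" and b: "B ** A ** B = B"
    and c: "transpose (A ** B) = A ** B" and d: "transpose (B ** A) = B ** A"
    and a': "A ** B' ** A = A" and b': "B' ** A ** B' = B'"
    and c': "transpose (A ** B') = A ** B'" and d': "transpose (B' ** A) = B' ** A"
    unfolding is_mp_inverse_def by auto
  have "B = B ** transpose (A ** B)"
    by (simp only: c b matrix_mul_assoc)
  also have "\<dots> = B ** transpose (A ** B' ** A ** B)"
    by (simp only: a')
  also have "\<dots> = B ** (transpose (A ** B) ** transpose (A ** B'))"
    by (simp only: matrix_transpose_mul matrix_mul_assoc)
  also have "\<dots> = B ** A ** B'"
    by (simp only: c c' b matrix_mul_assoc)
  finally have B: "B = B ** A ** B'" .
  have "B' = transpose (B' ** A) ** B'"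
    by (simp only: d' b')
  also have "\<dots> = transpose (B' ** (A ** B ** A)) ** B'"
    by (simp only: a)
  also have "\<dots> = (transpose (B ** A) ** transpose (B' ** A)) ** B'"
    by (simp only: matrix_transpose_mul matrix_mul_assoc)
  also have "\<dots> = B ** A ** (B' ** A ** B')"
    by (simp only: d d' matrix_mul_assoc)
  also have "\<dots> = B ** A ** B'"
    by (simp only: b')
  finally show ?thesis
    using B by simp
qed

lemma mp_inverse_eqI:
  assumes "is_mp_inverse A B"
  shows "mp_inverse A = B"
  unfolding mp_inverse_def
proof (rule the_equality)
  show "A ** B ** A = A \<and> B ** A ** B = B \<and> transpose (A ** B) = A ** B \<and> transpose (B ** A) = B ** A"
    using assms unfolding is_mp_inverse_def .
  fix B' assume "A ** B' ** A = A \<and> B' ** A ** B' = B' \<and>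
    transpose (A ** B') = A ** B' \<and> transpose (B' ** A) = B' ** A"
  then show "B' = B"
    using is_mp_inverse_unique[OF assms] unfolding is_mp_inverse_def by metis
qed

lemma mp_inverse_range_projection:
  fixes S P :: "real^'n^'n"
  assumes "transpose P = P" "P ** P = P" "S ** P = S" "P ** S = S"
    and ker: "\<And>x. S *v x = 0 \<Longrightarrow> P *v x = 0"
  shows "S ** mp_inverse S = P" and "mp_inverse S ** S = P"
proof -
  \<comment> \<open>S + (I - P) is invertible, and P C P, for its inverse C, satisfies the Penrose equations.\<close>
  let ?S' = "S + (mat 1 - P)"
  have S'P: "?S' ** P = S" and PS': "P ** ?S' = S"
    using assms(2-4) by (simp_all add: matrix_add_ldistrib matrix_add_rdistrib
        matrix_diff_ldistrib matrix_diff_rdistrib)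
  have "inj ((*v) ?S')"
  proof (rule injI)
    fix x y assume "?S' *v x = ?S' *v y"
    then have S'_xy: "?S' *v (x - y) = 0"
      by (simp add: matrix_vector_mult_diff_distrib)
    then have "S *v (x - y) = 0"
      using PS' by (metis matrix_vector_mul_assoc matrix_vector_mult_0_right)
    with S'_xy ker[OF this] show "x = y"
      by (simp add: matrix_vector_mult_add_rdistrib matrix_vector_mult_diff_rdistrib)
  qed
  then obtain C where CS': "C ** ?S' = mat 1"
    using matrix_left_invertible_injective by blast
  then have S'C: "?S' ** C = mat 1"
    using matrix_left_right_inverse by blast
  have CS: "C ** S = P"
    using CS' S'P by (metis matrix_mul_assoc matrix_mul_lid)
  have SC: "S ** C = P"
    using S'C PS' by (metis matrix_mul_assoc matrix_mul_rid)
  define B where "B = P ** C ** P"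
  have SB: "S ** B = P"
    by (simp add: B_def matrix_mul_assoc assms(2,3) SC)
  have BS: "B ** S = P"
    by (simp add: B_def assms(2,4) CS flip: matrix_mul_assoc)
  have "B ** S ** B = P ** B"
    by (simp only: BS)
  also have "\<dots> = B"
    by (simp add: B_def matrix_mul_assoc assms(2))
  finally have "B ** S ** B = B" .
  then have "is_mp_inverse S B"
    using SB BS assms(1,3,4) by (simp add: is_mp_inverse_def)
  then have "mp_inverse S = B"
    by (rule mp_inverse_eqI)
  then show "S ** mp_inverse S = P" "mp_inverse S ** S = P"
    using SB BS by simp_all
qed

section \<open>Frame operators\<close>

lemma P2_distr_iff:
  assumes "prob_space M" "sets M = sets borel" "f \<in> borel_measurable borel" "V \<in> sets borel"
  shows "P2 V (distr M borel f) \<longleftrightarrow> (AE x in M. f x \<in> V) \<and> integrable M (\<lambda>x. norm (f x)^2)"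
proof -
  have f: "f \<in> borel_measurable M"
    using assms(2,3) measurable_cong_sets by blast
  have "prob_space (distr M borel f)"
    using prob_space.prob_space_distr[OF assms(1) f] .
  moreover have "(AE y in distr M borel f. y \<in> V) \<longleftrightarrow> (AE x in M. f x \<in> V)"
    using AE_distr_iff[OF f, of "\<lambda>y. y \<in> V"] assms(4) by simp
  moreover have "integrable (distr M borel f) (\<lambda>y. norm y^2) \<longleftrightarrow> integrable M (\<lambda>x. norm (f x)^2)"
    by (rule integrable_distr_eq[OF f]) measurable
  ultimately show ?thesis
    by (simp add: P2_def)
qed

lemma transpose_frame_operator:
  assumes "integrable M (\<lambda>y. outer y y)"
  shows "transpose (frame_operator M) = frame_operator M"
  using integral_bounded_linear[OF bounded_linear_transpose assms]
  by (simp add: frame_operator_def transpose_outer)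

lemma frame_operator_quadratic_form:
  fixes M :: "(real^'n) measure"
  assumes "integrable M (\<lambda>y. outer y y)"
  shows "(frame_operator M *v x) \<bullet> x = (\<integral>y. (x \<bullet> y)^2 \<partial>M)"
proof -
  have "bounded_linear (\<lambda>G::real^'n^'n. (G *v x) \<bullet> x)"
    using bounded_linear_compose[OF bounded_linear_inner_left[of x]
        bounded_linear_matrix_vector_mult_left[of x]]
    by (simp add: o_def)
  from integral_bounded_linear[OF this assms] show ?thesis
    by (simp add: frame_operator_def outer_matrix_vector_mult power2_eq_square inner_commute)
qed

lemma frame_operator_mult_mp_inverse:
  assumes "subspace W" "prob_frame W M"
  shows "frame_operator M ** transpose (mp_inverse (frame_operator M)) = oblique_proj W (orth_comp W)"
proof -
  let ?S = "frame_operator M" and ?P = "oblique_proj W (orth_comp W)"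
  obtain A where "0 < A" and lower: "\<And>x. x \<in> W \<Longrightarrow> A * norm x^2 \<le> (\<integral>y. (x \<bullet> y)^2 \<partial>M)"
    using assms(2) unfolding prob_frame_def by blast
  have "P2 W M"
    using assms(2) by (simp add: prob_frame_def)
  then have "AE y in M. y \<in> W" and int: "integrable M (\<lambda>y. outer y y)"
    using integrable_outer[of "\<lambda>y. y" M "\<lambda>y. y"] measurable_cong_sets[of M borel]
    by (auto simp: P2_def)
  have PS: "?P ** ?S = ?S"
    using matrix_mult_moment[OF oblique_proj_orth_comp(3)[OF assms(1)] \<open>AE y in M. y \<in> W\<close> int]
    by (simp add: frame_operator_def)
  have SP: "?S ** ?P = ?S"
    using arg_cong[OF PS, of transpose] oblique_proj_orth_comp(1)[OF assms(1)]
    by (simp add: matrix_transpose_mul transpose_frame_operator[OF int])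
  have "?P *v x = 0" if "?S *v x = 0" for x
  proof -
    let ?w = "?P *v x"
    have "?S *v ?w = 0"
      using that SP by (simp add: matrix_vector_mul_assoc)
    then have "A * norm ?w^2 \<le> 0"
      using lower[OF oblique_proj_orth_comp(4)[OF assms(1), of x]]
        frame_operator_quadratic_form[OF int, of ?w]
      by simp
    then show ?thesis
      using \<open>0 < A\<close> by (simp add: mult_le_0_iff)
  qed
  then have "mp_inverse ?S ** ?S = ?P"
    using mp_inverse_range_projection(2) oblique_proj_orth_comp(1,2)[OF assms(1)] PS SP by blast
  then show ?thesis
    using oblique_proj_orth_comp(1)[OF assms(1)]
    by (metis matrix_transpose_mul transpose_frame_operator[OF int])
qed

section \<open>Oblique dual maps\<close>

locale oblique_dual_setting =
  fixes W V :: "(real^'n) set" and M :: "(real^'n) measure"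
  assumes subspace_V: "subspace V"
    and direct_sum: "direct_sum_UNIV W (orth_comp V)"
    and frame: "prob_frame W M"
begin

lemma subspace_W: "subspace W"
  using direct_sum unfolding direct_sum_UNIV_def by blast

lemma prob_space_M: "prob_space M" and sets_M: "sets M = sets borel"
  and AE_W: "AE y in M. y \<in> W" and integrable_norm_sq: "integrable M (\<lambda>y. norm y^2)"
  using frame unfolding prob_frame_def P2_def by blast+

lemma borel_measurable_M: "f \<in> borel_measurable borel \<Longrightarrow> f \<in> borel_measurable M"
  using sets_M measurable_cong_sets by blast

lemma P2_V_distr_iff:
  assumes "f \<in> borel_measurable borel"
  shows "P2 V (distr M borel f) \<longleftrightarrow> (AE x in M. f x \<in> V) \<and> integrable M (\<lambda>x. norm (f x)^2)"
  using P2_distr_iff[OF prob_space_M sets_M assms] closed_subspace[OF subspace_V] by simp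

lemma borel_measurable_moment:
  "g \<in> borel_measurable borel \<Longrightarrow> (\<lambda>x. outer x (g x)) \<in> borel_measurable M"
  using borel_measurable_outer[OF borel_measurable_M[of "\<lambda>x. x"] borel_measurable_M] by simp

lemma integrable_moment:
  assumes "g \<in> borel_measurable borel" "integrable M (\<lambda>x. norm (g x)^2)"
  shows "integrable M (\<lambda>x. outer x (g x))"
  using integrable_outer[OF borel_measurable_M[of "\<lambda>x. x"] borel_measurable_M[OF assms(1)]
      integrable_norm_sq assms(2)] by simp

lemma moment_affine:
  assumes "g \<in> borel_measurable borel" "integrable M (\<lambda>x. norm (g x)^2)"
  shows "(\<integral>x. outer x (transpose B *v x + g x) \<partial>M)
    = frame_operator M ** B + (\<integral>x. outer x (g x) \<partial>M)"
proof -
  have S: "integrable M (\<lambda>x. outer x x)"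
    using integrable_moment[of "\<lambda>x. x"] integrable_norm_sq by simp
  have "(\<integral>x. outer x (transpose B *v x + g x) \<partial>M) = (\<integral>x. outer x x ** B + outer x (g x) \<partial>M)"
    by (simp add: outer_add_right outer_matrix_mult)
  also have "\<dots> = (\<integral>x. outer x x ** B \<partial>M) + (\<integral>x. outer x (g x) \<partial>M)"
    using integrable_bounded_linear[OF bounded_linear_matrix_mult_right S] integrable_moment[OF assms]
    by (rule Bochner_Integration.integral_add)
  also have "(\<integral>x. outer x x ** B \<partial>M) = frame_operator M ** B"
    unfolding frame_operator_def
    by (rule integral_bounded_linear[OF bounded_linear_matrix_mult_right S])
  finally show ?thesis .
qed

lemma oblique_dual_imp_parametrized:
  assumes "P2 V (distr M borel T)" "T \<in> borel_measurable borel"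
    and "(\<integral>x. outer x (T x) \<partial>M) = oblique_proj W (orth_comp V)"
  shows "T x = oblique_proj V (orth_comp W) *v (mp_inverse (frame_operator M) *v x) + T x
    - (\<integral>y. ((mp_inverse (frame_operator M) *v x) \<bullet> y) *\<^sub>R T y \<partial>M)"
  using integral_inner_scaleR_eq_moment[OF integrable_moment[OF assms(2)]] assms
    oblique_proj_dual[OF subspace_V direct_sum] P2_V_distr_iff[OF assms(2)]
  by simp

lemma parametrized_imp_oblique_dual:
  assumes T_meas: "T \<in> borel_measurable borel" and T_V: "\<forall>x\<in>W. T x \<in> V"
    and h_meas: "h \<in> borel_measurable borel" and h_P2: "P2 V (distr M borel h)"
    and T_eq: "\<forall>x\<in>W. T x = oblique_proj V (orth_comp W) *v (mp_inverse (frame_operator M) *v x)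
      + h x - (\<integral>y. ((mp_inverse (frame_operator M) *v x) \<bullet> y) *\<^sub>R h y \<partial>M)"
  shows "P2 V (distr M borel T) \<and> (\<integral>x. outer x (T x) \<partial>M) = oblique_proj W (orth_comp V)"
proof -
  let ?P = "oblique_proj W (orth_comp V)" and ?Z = "mp_inverse (frame_operator M)"
  define H where "H = (\<integral>y. outer y (h y) \<partial>M)"
  define B where "B = transpose ?Z ** (?P - H)"
  have h_sq: "integrable M (\<lambda>x. norm (h x)^2)"
    using h_P2 P2_V_distr_iff[OF h_meas] by blast
  have T_affine: "T x = transpose B *v x + h x" if "x \<in> W" for x
  proof -
    have "(\<integral>y. ((?Z *v x) \<bullet> y) *\<^sub>R h y \<partial>M) = transpose H *v (?Z *v x)"
      using integral_inner_scaleR_eq_moment[OF integrable_moment[OF h_meas h_sq]] by (simp add: H_def)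
    then have "T x = transpose ?P *v (?Z *v x) - transpose H *v (?Z *v x) + h x"
      using T_eq that oblique_proj_dual[OF subspace_V direct_sum] by simp
    also have "\<dots> = transpose B *v x + h x"
      by (simp add: B_def matrix_transpose_mul transpose_diff matrix_diff_rdistrib
          matrix_vector_mult_diff_rdistrib matrix_vector_mul_assoc)
    finally show ?thesis .
  qed
  have T_AE: "AE x in M. T x = transpose B *v x + h x"
    using AE_W by eventually_elim (rule T_affine)
  have B_meas: "(\<lambda>x. transpose B *v x) \<in> borel_measurable borel"
    by (intro borel_measurable_continuous_onI linear_continuous_on matrix_vector_mul_bounded_linear)
  have "integrable M (\<lambda>x. norm (transpose B *v x)^2)"
    using integrable_norm_sq_linear[OF matrix_vector_mul_bounded_linear[of "transpose B"]
        borel_measurable_M[of "\<lambda>x. x"] integrable_norm_sq] by simp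
  then have "integrable M (\<lambda>x. norm (transpose B *v x + h x)^2)"
    using B_meas h_meas h_sq by (intro integrable_norm_sq_add borel_measurable_M)
  then have "integrable M (\<lambda>x. norm (T x)^2)"
  proof (rule integrable_cong_AE_imp)
    show "(\<lambda>x. norm (T x)^2) \<in> borel_measurable M"
      using borel_measurable_M[OF T_meas] by measurable
    show "AE x in M. norm (transpose B *v x + h x)^2 = norm (T x)^2"
      using T_AE by eventually_elim simp
  qed
  moreover have "AE x in M. T x \<in> V"
    using AE_W T_V by auto
  ultimately have "P2 V (distr M borel T)"
    using P2_V_distr_iff[OF T_meas] by blast
  have "(\<integral>x. outer x (T x) \<partial>M) = (\<integral>x. outer x (transpose B *v x + h x) \<partial>M)"
  proof (rule integral_cong_AE)
    show "(\<lambda>x. outer x (T x)) \<in> borel_measurable M"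
      using T_meas by (rule borel_measurable_moment)
    show "(\<lambda>x. outer x (transpose B *v x + h x)) \<in> borel_measurable M"
      using B_meas h_meas by (intro borel_measurable_moment borel_measurable_add)
    show "AE x in M. outer x (T x) = outer x (transpose B *v x + h x)"
      using T_AE by eventually_elim simp
  qed
  also have "\<dots> = frame_operator M ** B + H"
    unfolding H_def by (rule moment_affine[OF h_meas h_sq])
  also have "frame_operator M ** B = oblique_proj W (orth_comp W) ** (?P - H)"
    by (simp add: B_def matrix_mul_assoc frame_operator_mult_mp_inverse[OF subspace_W frame])
  also have "\<dots> = ?P - H"
  proof -
    have "oblique_proj W (orth_comp W) ** ?P = ?P"
      unfolding matrix_eq using oblique_proj_mem(1)[OF direct_sum]
      by (simp add: oblique_proj_orth_comp(3)[OF subspace_W] flip: matrix_vector_mul_assoc)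
    moreover have "oblique_proj W (orth_comp W) ** H = H"
      unfolding H_def using oblique_proj_orth_comp(3)[OF subspace_W] AE_W
        integrable_moment[OF h_meas h_sq] by (rule matrix_mult_moment)
    ultimately show ?thesis
      by (simp add: matrix_diff_ldistrib)
  qed
  finally show ?thesis
    using \<open>P2 V (distr M borel T)\<close> by simp
qed

end

theorem proposition4p6:
  fixes W V :: "(real^'n) set" and M :: "(real^'n) measure"
    and T :: "real^'n \<Rightarrow> real^'n"
  assumes "subspace W" and "subspace V"
    and "direct_sum_UNIV W (orth_comp V)"
    and "prob_frame W M"
    and "T \<in> borel_measurable borel" and "\<forall>x\<in>W. T x \<in> V"
  shows "(P2 V (distr M borel T) \<and>
          (\<integral>x. outer x (T x) \<partial>M) = oblique_proj W (orth_comp V))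
     \<longleftrightarrow>
         (\<exists>h :: real^'n \<Rightarrow> real^'n. h \<in> borel_measurable borel \<and> (\<forall>x\<in>W. h x \<in> V) \<and>
            P2 V (distr M borel h) \<and>
            (\<forall>x\<in>W. T x = oblique_proj V (orth_comp W) *v (mp_inverse (frame_operator M) *v x)
                     + h x
                     - (\<integral>y. ((mp_inverse (frame_operator M) *v x) \<bullet> y) *\<^sub>R h y \<partial>M)))"
proof -
  \<comment> \<open>The hypothesis that W is a subspace is implied by the direct sum.\<close>
  interpret oblique_dual_setting W V M
    using assms(2-4) by unfold_locales
  show ?thesis
    using assms(5,6) oblique_dual_imp_parametrized parametrized_imp_oblique_dual[OF assms(5,6)]
    by blast
qed

end
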